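(* For every positive integer $n$, $L(n+1) \ge L(n)$.
   Context: Given a finite multiset of $n$ rectangles (tiles), a rectangular layout is a tiling of a rectangle by all $n$ tiles (axis-parallel, no holes, no overlaps). Two layouts are counted as different if the resulting big rectangles have different perimeters. $L(n)$ denotes the maximum, over all choices of $n$ rectangular tiles, of the number of different rectangular layouts that can be formed using all the tiles. *)

theory Defs
  imports Main "HOL-Library.Extended_Nat"
begin

text \<open>A tile is a pair (width, height) of positive reals; a multiset of n tiles
is represented by a list of length n (order irrelevant).\<close>

type_synonym tile = "real \<times> real"

definition closed_rect :: "real \<Rightarrow> real \<Rightarrow> real \<Rightarrow> real \<Rightarrow> (real \<times> real) set" where
  "closed_rect a b w h = {(x, y). a \<le> x \<and> x \<le> a + w \<and> b \<le> y \<and> y \<le> b + h}"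

definition open_rect :: "real \<Rightarrow> real \<Rightarrow> real \<Rightarrow> real \<Rightarrow> (real \<times> real) set" where
  "open_rect a b w h = {(x, y). a < x \<and> x < a + w \<and> b < y \<and> y < b + h}"

definition placed_w :: "tile \<Rightarrow> bool \<Rightarrow> real" where
  "placed_w t r = (if r then snd t else fst t)"

definition placed_h :: "tile \<Rightarrow> bool \<Rightarrow> real" where
  "placed_h t r = (if r then fst t else snd t)"

definition is_layout :: "tile list \<Rightarrow> real \<Rightarrow> real \<Rightarrow> (nat \<Rightarrow> real \<times> real) \<Rightarrow> (nat \<Rightarrow> bool) \<Rightarrow> bool" where
  "is_layout ts W H pos rot \<longleftrightarrow>
     W > 0 \<and> H > 0 \<and>
     (\<Union>i<length ts. closed_rect (fst (pos i)) (snd (pos i))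
                      (placed_w (ts ! i) (rot i)) (placed_h (ts ! i) (rot i)))
       = closed_rect 0 0 W H \<and>
     (\<forall>i<length ts. \<forall>j<length ts. i \<noteq> j \<longrightarrow>
        open_rect (fst (pos i)) (snd (pos i)) (placed_w (ts ! i) (rot i)) (placed_h (ts ! i) (rot i))
        \<inter> open_rect (fst (pos j)) (snd (pos j)) (placed_w (ts ! j) (rot j)) (placed_h (ts ! j) (rot j))
        = {})"

definition layout_perimeters :: "tile list \<Rightarrow> real set" where
  "layout_perimeters ts = {2 * (W + H) | W H. \<exists>pos rot. is_layout ts W H pos rot}"

definition valid_tiles :: "tile list \<Rightarrow> bool" where
  "valid_tiles ts \<longleftrightarrow> (\<forall>t\<in>set ts. fst t > 0 \<and> snd t > 0)"

text \<open>L(n): maximum over all multisets of n tiles of the number of distinct layouts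
(layouts counted by perimeter).\<close>
definition L :: "nat \<Rightarrow> enat" where
  "L n = (SUP ts \<in> {ts. length ts = n \<and> valid_tiles ts}. enat (card (layout_perimeters ts)))"

end

theory Submission
  imports Defs "HOL-Analysis.Henstock_Kurzweil_Integration"
begin

text \<open>Halving one tile turns every layout of \<open>n\<close> tiles into a layout of \<open>n + 1\<close> tiles with
  the same outer rectangle, so no perimeter is lost. Since \<open>L\<close> counts perimeters by
  cardinality, the perimeter set must also be shown finite: the width of a layout is the total
  width of the tiles touching its bottom edge (a one-dimensional tiling argument via additivity
  of content), so widths and heights range over the finitely many sums of tile sides.\<close>

lemma sum_lengths_of_interval_tiling:
  fixes a w :: "'i \<Rightarrow> real"
  assumes "finite I" and pos: "\<And>i. i \<in> I \<Longrightarrow> w i > 0"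
    and disj: "\<And>i j. i \<in> I \<Longrightarrow> j \<in> I \<Longrightarrow> i \<noteq> j \<Longrightarrow> {a i<..<a i + w i} \<inter> {a j<..<a j + w j} = {}"
    and cover: "(\<Union>i\<in>I. {a i..a i + w i}) = {0..c}" and "0 \<le> c"
  shows "sum w I = c"
proof -
  define seg where "seg i = {a i..a i + w i}" for i
  have inj: "inj_on seg I"
  proof (rule inj_onI, rule ccontr)
    fix i j assume ij: "i \<in> I" "j \<in> I" "seg i = seg j" "i \<noteq> j"
    then have "{a i<..<a i + w i} = {a j<..<a j + w j}"
      using pos by (metis interior_atLeastAtMost_real seg_def)
    then show False using disj[OF ij(1,2,4)] pos[OF ij(1)] by auto
  qed
  have "seg ` I division_of cbox 0 c"
  proof (rule division_ofI)
    show "\<Union> (seg ` I) = cbox 0 c" using cover by (simp add: seg_def cbox_interval)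
    fix K1 K2 assume "K1 \<in> seg ` I" "K2 \<in> seg ` I" "K1 \<noteq> K2"
    then obtain i j where "i \<in> I" "j \<in> I" "i \<noteq> j" "K1 = seg i" "K2 = seg j" by blast
    then show "interior K1 \<inter> interior K2 = {}" using disj[of i j] by (simp add: seg_def)
  next
    fix K assume "K \<in> seg ` I"
    then obtain i where i: "i \<in> I" "K = seg i" by blast
    have "seg i \<subseteq> (\<Union>j\<in>I. seg j)" using i by blast
    then show "K \<subseteq> cbox 0 c" using cover i by (simp add: seg_def cbox_interval)
    show "K \<noteq> {}" using i pos[of i] by (simp add: seg_def)
    show "\<exists>a b. K = cbox a b" using i by (auto simp: seg_def cbox_interval)
  qed (use \<open>finite I\<close> in simp)
  then have "sum content (seg ` I) = c"
    using \<open>0 \<le> c\<close> by (simp add: additive_content_division cbox_interval)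
  moreover have "sum content (seg ` I) = sum w I"
    unfolding sum.reindex[OF inj] using pos by (auto simp: seg_def less_imp_le intro: sum.cong)
  ultimately show ?thesis by simp
qed

lemma closed_rect_swap: "prod.swap ` closed_rect a b w h = closed_rect b a h w"
  by (auto simp: closed_rect_def image_iff)

lemma open_rect_swap: "prod.swap ` open_rect a b w h = open_rect b a h w"
  by (auto simp: open_rect_def image_iff)

lemma bottom_row_width:
  fixes a b w h :: "nat \<Rightarrow> real"
  assumes pos: "\<And>i. i < n \<Longrightarrow> w i > 0 \<and> h i > 0"
    and cover: "(\<Union>i<n. closed_rect (a i) (b i) (w i) (h i)) = closed_rect 0 0 W H"
    and disj: "\<And>i j. i < n \<Longrightarrow> j < n \<Longrightarrow> i \<noteq> j \<Longrightarrow>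
      open_rect (a i) (b i) (w i) (h i) \<inter> open_rect (a j) (b j) (w j) (h j) = {}"
    and "0 \<le> W" "0 \<le> H"
  shows "sum w {i. i < n \<and> b i = 0} = W"
proof -
  define R where "R = {i. i < n \<and> b i = 0}"
  have inside: "closed_rect (a i) (b i) (w i) (h i) \<subseteq> closed_rect 0 0 W H" if "i < n" for i
    using that by (subst cover[symmetric]) blast
  have b_nonneg: "0 \<le> b i" if "i < n" for i
    using inside[OF that] pos[OF that] by (auto simp: closed_rect_def)
  show ?thesis unfolding R_def[symmetric]
  proof (rule sum_lengths_of_interval_tiling)
    show "finite R" "\<And>i. i \<in> R \<Longrightarrow> w i > 0" using pos by (auto simp: R_def)
  next
    fix i j assume ij: "i \<in> R" "j \<in> R" "i \<noteq> j"
    have "(x, min (h i) (h j) / 2) \<in> open_rect (a i) (b i) (w i) (h i) \<inter> open_rect (a j) (b j) (w j) (h j)"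
      if "x \<in> {a i<..<a i + w i}" "x \<in> {a j<..<a j + w j}" for x
      using that ij pos[of i] pos[of j] by (auto simp: R_def open_rect_def min_def)
    moreover have "open_rect (a i) (b i) (w i) (h i) \<inter> open_rect (a j) (b j) (w j) (h j) = {}"
      using ij disj[of i j] unfolding R_def by blast
    ultimately show "{a i<..<a i + w i} \<inter> {a j<..<a j + w j} = {}" by blast
  next
    show "(\<Union>i\<in>R. {a i..a i + w i}) = {0..W}"
    proof (intro equalityI subsetI)
      fix x assume "x \<in> (\<Union>i\<in>R. {a i..a i + w i})"
      then obtain i where "i \<in> R" "x \<in> {a i..a i + w i}" by blast
      then have "(x, 0) \<in> closed_rect (a i) (b i) (w i) (h i)"
        using pos[of i] by (simp add: R_def closed_rect_def)
      then have "(x, 0) \<in> closed_rect 0 0 W H"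
        using inside[of i] \<open>i \<in> R\<close> unfolding R_def by blast
      then show "x \<in> {0..W}" by (simp add: closed_rect_def)
    next
      fix x assume "x \<in> {0..W}"
      then have "(x, 0) \<in> (\<Union>i<n. closed_rect (a i) (b i) (w i) (h i))"
        unfolding cover using \<open>0 \<le> H\<close> by (simp add: closed_rect_def)
      then obtain i where "i < n" "(x, 0) \<in> closed_rect (a i) (b i) (w i) (h i)" by blast
      moreover from this have "b i = 0"
        using b_nonneg[of i] by (simp add: closed_rect_def)
      ultimately show "x \<in> (\<Union>i\<in>R. {a i..a i + w i})"
        by (auto simp: R_def closed_rect_def)
    qed
  qed (fact \<open>0 \<le> W\<close>)
qed

lemma left_column_height:
  fixes a b w h :: "nat \<Rightarrow> real"
  assumes pos: "\<And>i. i < n \<Longrightarrow> w i > 0 \<and> h i > 0"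
    and cover: "(\<Union>i<n. closed_rect (a i) (b i) (w i) (h i)) = closed_rect 0 0 W H"
    and disj: "\<And>i j. i < n \<Longrightarrow> j < n \<Longrightarrow> i \<noteq> j \<Longrightarrow>
      open_rect (a i) (b i) (w i) (h i) \<inter> open_rect (a j) (b j) (w j) (h j) = {}"
    and "0 \<le> W" "0 \<le> H"
  shows "sum h {i. i < n \<and> a i = 0} = H"
proof (rule bottom_row_width[where a = b and w = h and h = w and W = H])
  show "(\<Union>i<n. closed_rect (b i) (a i) (h i) (w i)) = closed_rect 0 0 H W"
    using arg_cong[OF cover, of "image prod.swap"] by (simp add: image_UN closed_rect_swap)
  fix i j assume "i < n" "j < n" "i \<noteq> j"
  then show "open_rect (b i) (a i) (h i) (w i) \<inter> open_rect (b j) (a j) (h j) (w j) = {}"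
    using arg_cong[OF disj, of i j "image prod.swap"]
    by (simp add: image_Int[OF inj_swap] open_rect_swap)
qed (use pos \<open>0 \<le> W\<close> \<open>0 \<le> H\<close> in simp_all)

text \<open>Each tile contributes one of its sides or, through the summand \<open>0\<close>, nothing.\<close>

definition side_sums :: "tile list \<Rightarrow> real set" where
  "side_sums ts = (\<lambda>g. \<Sum>i<length ts. g i) ` (\<Pi>\<^sub>E i\<in>{..<length ts}. {0, fst (ts ! i), snd (ts ! i)})"

lemma finite_side_sums: "finite (side_sums ts)"
  unfolding side_sums_def by (auto intro!: finite_PiE)

lemma sum_in_side_sums:
  assumes "I \<subseteq> {..<length ts}" and "\<And>i. i \<in> I \<Longrightarrow> f i \<in> {fst (ts ! i), snd (ts ! i)}"
  shows "sum f I \<in> side_sums ts"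
proof -
  define g where "g = restrict (\<lambda>i. if i \<in> I then f i else 0) {..<length ts}"
  have g_mem: "g \<in> (\<Pi>\<^sub>E i\<in>{..<length ts}. {0, fst (ts ! i), snd (ts ! i)})"
    using assms(2) by (auto simp: g_def)
  have g_sum: "(\<Sum>i<length ts. g i) = sum f I"
    using assms(1) by (simp add: g_def sum.If_cases Int_absorb1)
  show ?thesis unfolding side_sums_def using g_sum[symmetric] g_mem by (rule image_eqI)
qed

lemma placed_w_cases: "placed_w t r \<in> {fst t, snd t}"
  and placed_h_cases: "placed_h t r \<in> {fst t, snd t}"
  by (auto simp: placed_w_def placed_h_def)

lemma layout_dims_in_side_sums:
  assumes "is_layout ts W H pos rot" and "valid_tiles ts"
  shows "W \<in> side_sums ts" "H \<in> side_sums ts"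
proof -
  let ?w = "\<lambda>i. placed_w (ts ! i) (rot i)" and ?h = "\<lambda>i. placed_h (ts ! i) (rot i)"
  have pos: "?w i > 0 \<and> ?h i > 0" if "i < length ts" for i
    using assms(2) nth_mem[OF that] by (auto simp: valid_tiles_def placed_w_def placed_h_def)
  have cover: "(\<Union>i<length ts. closed_rect (fst (pos i)) (snd (pos i)) (?w i) (?h i)) = closed_rect 0 0 W H"
    and disj: "\<And>i j. i < length ts \<Longrightarrow> j < length ts \<Longrightarrow> i \<noteq> j \<Longrightarrow>
      open_rect (fst (pos i)) (snd (pos i)) (?w i) (?h i) \<inter> open_rect (fst (pos j)) (snd (pos j)) (?w j) (?h j) = {}"
    and "0 \<le> W" "0 \<le> H"
    using assms(1) by (auto simp: is_layout_def)
  have "sum ?w {i. i < length ts \<and> snd (pos i) = 0} = W"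
    using pos cover disj \<open>0 \<le> W\<close> \<open>0 \<le> H\<close> by (rule bottom_row_width)
  then show "W \<in> side_sums ts"
    by (metis (no_types, lifting) sum_in_side_sums mem_Collect_eq subsetI lessThan_iff placed_w_cases)
  have "sum ?h {i. i < length ts \<and> fst (pos i) = 0} = H"
    using pos cover disj \<open>0 \<le> W\<close> \<open>0 \<le> H\<close> by (rule left_column_height)
  then show "H \<in> side_sums ts"
    by (metis (no_types, lifting) sum_in_side_sums mem_Collect_eq subsetI lessThan_iff placed_h_cases)
qed

lemma finite_layout_perimeters:
  assumes "valid_tiles ts"
  shows "finite (layout_perimeters ts)"
proof (rule finite_subset)
  show "layout_perimeters ts \<subseteq> (\<lambda>(W, H). 2 * (W + H)) ` (side_sums ts \<times> side_sums ts)"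
  proof
    fix p assume "p \<in> layout_perimeters ts"
    then obtain W H pos rot where p: "p = 2 * (W + H)" and layout: "is_layout ts W H pos rot"
      unfolding layout_perimeters_def by blast
    show "p \<in> (\<lambda>(W, H). 2 * (W + H)) ` (side_sums ts \<times> side_sums ts)"
      unfolding p using layout_dims_in_side_sums[OF layout assms] by (intro image_eqI[of _ _ "(W, H)"]) auto
  qed
qed (simp add: finite_side_sums)

definition tile_rect :: "tile list \<Rightarrow> (nat \<Rightarrow> real \<times> real) \<Rightarrow> (nat \<Rightarrow> bool) \<Rightarrow> nat \<Rightarrow> (real \<times> real) set" where
  "tile_rect ts pos rot i =
     closed_rect (fst (pos i)) (snd (pos i)) (placed_w (ts ! i) (rot i)) (placed_h (ts ! i) (rot i))"

definition tile_interior :: "tile list \<Rightarrow> (nat \<Rightarrow> real \<times> real) \<Rightarrow> (nat \<Rightarrow> bool) \<Rightarrow> nat \<Rightarrow> (real \<times> real) set" where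
  "tile_interior ts pos rot i =
     open_rect (fst (pos i)) (snd (pos i)) (placed_w (ts ! i) (rot i)) (placed_h (ts ! i) (rot i))"

lemma is_layout_iff:
  "is_layout ts W H pos rot \<longleftrightarrow> W > 0 \<and> H > 0 \<and>
     (\<Union>i<length ts. tile_rect ts pos rot i) = closed_rect 0 0 W H \<and>
     (\<forall>i<length ts. \<forall>j<length ts. i \<noteq> j \<longrightarrow> tile_interior ts pos rot i \<inter> tile_interior ts pos rot j = {})"
  unfolding is_layout_def tile_rect_def tile_interior_def ..

lemma is_layout_refine:
  assumes layout: "is_layout ts W H pos rot" and "k < length ts"
    and len: "length ts' = Suc (length ts)"
    and halves: "tile_rect ts' pos' rot' k \<union> tile_rect ts' pos' rot' (length ts) = tile_rect ts pos rot k"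
    and halves_inside: "tile_interior ts' pos' rot' k \<subseteq> tile_interior ts pos rot k"
      "tile_interior ts' pos' rot' (length ts) \<subseteq> tile_interior ts pos rot k"
    and halves_disjoint: "tile_interior ts' pos' rot' k \<inter> tile_interior ts' pos' rot' (length ts) = {}"
    and others: "\<And>i. i < length ts \<Longrightarrow> i \<noteq> k \<Longrightarrow>
      tile_rect ts' pos' rot' i = tile_rect ts pos rot i \<and> tile_interior ts' pos' rot' i = tile_interior ts pos rot i"
  shows "is_layout ts' W H pos' rot'"
proof -
  let ?n = "length ts" and ?R = "tile_rect ts pos rot" and ?R' = "tile_rect ts' pos' rot'"
    and ?O = "tile_interior ts pos rot" and ?O' = "tile_interior ts' pos' rot'"
  define parent where "parent i = (if i = ?n then k else i)" for i
  have parent_less: "parent i < ?n" if "i < Suc ?n" for i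
    using that \<open>k < ?n\<close> by (auto simp: parent_def)
  have parent_interior: "?O' i \<subseteq> ?O (parent i)" if "i < Suc ?n" for i
  proof (cases "i = k \<or> i = ?n")
    case True
    then show ?thesis using halves_inside \<open>k < ?n\<close> by (auto simp: parent_def)
  next
    case False
    then show ?thesis using that others[of i] by (simp add: parent_def)
  qed
  have "(\<Union>i<Suc ?n. ?R' i) = (\<Union>i<?n. ?R i)"
  proof (intro equalityI subsetI)
    fix x assume "x \<in> (\<Union>i<Suc ?n. ?R' i)"
    then obtain i where "i < Suc ?n" "x \<in> ?R' i" by blast
    then have "x \<in> ?R (parent i)"
      using halves others[of i] by (cases "i = k \<or> i = ?n") (auto simp: parent_def)
    then show "x \<in> (\<Union>i<?n. ?R i)" using parent_less[OF \<open>i < Suc ?n\<close>] by blast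
  next
    fix x assume "x \<in> (\<Union>i<?n. ?R i)"
    then obtain i where "i < ?n" "x \<in> ?R i" by blast
    then have "x \<in> ?R' i \<or> x \<in> ?R' ?n"
      using halves others[of i] by (cases "i = k") auto
    then show "x \<in> (\<Union>i<Suc ?n. ?R' i)" using \<open>i < ?n\<close> by auto
  qed
  moreover have "?O' i \<inter> ?O' j = {}" if "i < Suc ?n" "j < Suc ?n" "i \<noteq> j" for i j
  proof (cases "parent i = parent j")
    case True
    then have "{i, j} = {k, ?n}" using that \<open>k < ?n\<close> by (auto simp: parent_def split: if_splits)
    then show ?thesis using halves_disjoint by (auto simp: doubleton_eq_iff)
  next
    case False
    then have "?O (parent i) \<inter> ?O (parent j) = {}"
      using layout parent_less that by (simp add: is_layout_iff)
    then show ?thesis using parent_interior that by blast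
  qed
  ultimately show ?thesis using layout len by (simp add: is_layout_iff)
qed

definition halve_tile :: "tile \<Rightarrow> tile" where
  "halve_tile t = (fst t / 2, snd t)"

definition split_tile :: "nat \<Rightarrow> tile list \<Rightarrow> tile list" where
  "split_tile k ts = ts[k := halve_tile (ts ! k)] @ [halve_tile (ts ! k)]"

lemma length_split_tile: "length (split_tile k ts) = Suc (length ts)"
  by (simp add: split_tile_def)

lemma valid_split_tile: "valid_tiles ts \<Longrightarrow> k < length ts \<Longrightarrow> valid_tiles (split_tile k ts)"
  by (auto simp: valid_tiles_def split_tile_def halve_tile_def dest: set_update_subset_insert[THEN subsetD])

lemma is_layout_split_tile:
  assumes layout: "is_layout ts W H pos rot" and k: "k < length ts"
  \<comment> \<open>the second half sits beside the first along the halved side, which is vertical if rotated\<close>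
  defines "corner \<equiv> (if rot k then (fst (pos k), snd (pos k) + fst (ts ! k) / 2)
                               else (fst (pos k) + fst (ts ! k) / 2, snd (pos k)))"
  shows "is_layout (split_tile k ts) W H (pos(length ts := corner)) (rot(length ts := rot k))"
proof (rule is_layout_refine[OF layout k length_split_tile])
  let ?ts' = "split_tile k ts" and ?pos' = "pos(length ts := corner)" and ?rot' = "rot(length ts := rot k)"
  have nth: "?ts' ! k = halve_tile (ts ! k)" "?ts' ! length ts = halve_tile (ts ! k)"
    using k by (simp_all add: split_tile_def nth_append)
  obtain x y where xy: "pos k = (x, y)" by fastforce
  obtain w h where wh: "ts ! k = (w, h)" by fastforce
  note defs = tile_rect_def tile_interior_def nth xy wh corner_def halve_tile_def placed_w_def placed_h_def
  show "tile_rect ?ts' ?pos' ?rot' k \<union> tile_rect ?ts' ?pos' ?rot' (length ts) = tile_rect ts pos rot k"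
    using k by (cases "rot k") (auto simp: defs closed_rect_def)
  show "tile_interior ?ts' ?pos' ?rot' k \<subseteq> tile_interior ts pos rot k"
    "tile_interior ?ts' ?pos' ?rot' (length ts) \<subseteq> tile_interior ts pos rot k"
    "tile_interior ?ts' ?pos' ?rot' k \<inter> tile_interior ?ts' ?pos' ?rot' (length ts) = {}"
    using k by (cases "rot k"; auto simp: defs open_rect_def)+
  fix i assume "i < length ts" "i \<noteq> k"
  then show "tile_rect ?ts' ?pos' ?rot' i = tile_rect ts pos rot i \<and>
    tile_interior ?ts' ?pos' ?rot' i = tile_interior ts pos rot i"
    by (simp add: tile_rect_def tile_interior_def split_tile_def nth_append)
qed

lemma layout_perimeters_split_tile:
  "k < length ts \<Longrightarrow> layout_perimeters ts \<subseteq> layout_perimeters (split_tile k ts)"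
  unfolding layout_perimeters_def by (blast dest: is_layout_split_tile)

theorem mainTheorem5:
  fixes n :: nat
  assumes "n \<ge> 1"
  shows "L (n + 1) \<ge> L n"
  unfolding L_def
proof (rule SUP_mono)
  fix ts assume ts: "ts \<in> {ts. length ts = n \<and> valid_tiles ts}"
  then have "0 < length ts" "valid_tiles ts" using assms by auto
  then have "split_tile 0 ts \<in> {ts. length ts = n + 1 \<and> valid_tiles ts}"
    using ts valid_split_tile[OF \<open>valid_tiles ts\<close> \<open>0 < length ts\<close>] by (simp add: length_split_tile)
  moreover have "card (layout_perimeters ts) \<le> card (layout_perimeters (split_tile 0 ts))"
    using \<open>0 < length ts\<close> \<open>valid_tiles ts\<close>
    by (intro card_mono finite_layout_perimeters valid_split_tile layout_perimeters_split_tile)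
  ultimately show "\<exists>ts'\<in>{ts. length ts = n + 1 \<and> valid_tiles ts}.
      enat (card (layout_perimeters ts)) \<le> enat (card (layout_perimeters ts'))"
    by auto
qed

end
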